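(* Let $\mathcal R_1,\mathcal R_2\subseteq\mathbb{N}_0^n\times\mathbb{N}_0^n$ be reaction networks on the same set of $n$ species, both without catalytic species. Then $\mathrm{cl}(\mathcal R_1)=\mathrm{cl}(\mathcal R_2)$ if and only if $\mathcal R_1(x)=\mathcal R_2(x)$ for all $x\in\mathbb{N}_0^n$.
   Context: A reaction network (RN) is a (possibly infinite) subset $\mathcal R\subseteq\mathbb{N}_0^n\times\mathbb{N}_0^n$ containing no element $(y,y')$ with $y=y'$; elements $(y,y')$ are reactions $y\to y'$. A reaction $y\to y'$ has a catalytic species if there is $i$ with $y^i>0$ and $(y')^i>0$; an RN is without catalytic species if none of its reactions has a catalytic species. For $r_1=(y_1,y_1'),\ r_2=(y_2,y_2')$ define $r_1\oplus r_2=(y_1+0\vee(y_2-y_1'),\ y_2'+0\vee(y_1'-y_2))$ ($\vee$ componentwise maximum); it is associative. For $A\subseteq\mathbb{N}_0^n\times\mathbb{N}_0^n$, $\mathrm{cl}(A)$ is the set of all finite $\oplus$-sums of elements of $A$, including the empty sum $(0,0)$. An ordered sequence of reactions $y_1\to y_1',\dots,y_m\to y_m'$ is active on $x\in\mathbb{N}_0^n$ if $x+\sum_{i=1}^{k-1}(y_i'-y_i)\ge y_k$ (componentwise) for all $k$. A state $x$ leads to $x'$ via $\mathcal R$ if there is an ordered sequence of $m\ge0$ reactions of $\mathcal R$ (repetitions allowed) active on $x$ with $x'=x+\sum_{i=1}^m(y_i'-y_i)$. $\mathcal R(x)$ denotes the set of states to which $x$ leads via $\mathcal R$. *)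

theory Defs
  imports Main
begin

type_synonym 'n state = "'n \<Rightarrow> nat"
type_synonym 'n reaction = "'n state \<times> 'n state"

definition is_RN :: "'n reaction set \<Rightarrow> bool" where
  "is_RN R \<longleftrightarrow> (\<forall>(y, y') \<in> R. y \<noteq> y')"

definition has_catalytic :: "'n reaction \<Rightarrow> bool" where
  "has_catalytic r \<longleftrightarrow> (\<exists>i. fst r i > 0 \<and> snd r i > 0)"

definition no_catalytic :: "'n reaction set \<Rightarrow> bool" where
  "no_catalytic R \<longleftrightarrow> (\<forall>r \<in> R. \<not> has_catalytic r)"

text \<open>r1 (+) r2; on nat, a - b is max 0 (a - b).\<close>
definition oplus :: "'n reaction \<Rightarrow> 'n reaction \<Rightarrow> 'n reaction" where
  "oplus r1 r2 = (\<lambda>i. fst r1 i + (fst r2 i - snd r1 i), \<lambda>i. snd r2 i + (snd r1 i - fst r2 i))"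

definition zero_reaction :: "'n reaction" where
  "zero_reaction = (\<lambda>_. 0, \<lambda>_. 0)"

definition cl :: "'n reaction set \<Rightarrow> 'n reaction set" where
  "cl A = {foldr oplus rs zero_reaction | rs. set rs \<subseteq> A}"

definition active :: "'n reaction list \<Rightarrow> 'n state \<Rightarrow> bool" where
  "active rs x \<longleftrightarrow> (\<forall>k < length rs. \<forall>i.
     int (x i) + (\<Sum>j<k. int (snd (rs ! j) i) - int (fst (rs ! j) i)) \<ge> int (fst (rs ! k) i))"

definition leads_to :: "'n reaction set \<Rightarrow> 'n state \<Rightarrow> 'n state \<Rightarrow> bool" where
  "leads_to R x x' \<longleftrightarrow> (\<exists>rs. set rs \<subseteq> R \<and> active rs x \<and>
     (\<forall>i. int (x' i) = int (x i) + (\<Sum>j<length rs. int (snd (rs ! j) i) - int (fst (rs ! j) i))))"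

definition reach :: "'n reaction set \<Rightarrow> 'n state \<Rightarrow> 'n state set" where
  "reach R x = {x'. leads_to R x x'}"

end

(* The oplus-sum (p, p') of a reaction sequence is its net reaction: the sequence is active
   on x exactly when p \<le> x, and it then leads to x - p + p'. Hence R(x) is determined by
   cl R. Conversely, if y \<rightarrow> y' has no catalytic species, then (y, y') is the only reaction
   (p, p') with p \<le> y and y - p + p' = y', so y' \<in> R(y) already forces y \<rightarrow> y' \<in> cl R.
   Thus R(x) \<subseteq> R'(x) for all x puts every reaction of R into cl R', hence cl R \<subseteq> cl R'. *)

theory Submission
  imports Defs
begin

definition oplus_list :: "'n reaction list \<Rightarrow> 'n reaction" where
  "oplus_list rs = foldr oplus rs zero_reaction"

text \<open>Truncated subtraction: \<open>fire r x\<close> is meaningful only when \<open>fst r \<le> x\<close>.\<close>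
definition fire :: "'n reaction \<Rightarrow> 'n state \<Rightarrow> 'n state" where
  "fire r x = (\<lambda>i. x i - fst r i + snd r i)"

definition net_change :: "'n reaction list \<Rightarrow> 'n \<Rightarrow> int" where
  "net_change rs i = (\<Sum>j<length rs. int (snd (rs ! j) i) - int (fst (rs ! j) i))"

lemma oplus_assoc: "oplus (oplus a b) c = oplus a (oplus b c)"
  by (simp add: oplus_def fun_eq_iff) arith

lemma oplus_zero_left: "oplus zero_reaction r = r"
  by (simp add: oplus_def zero_reaction_def)

lemma oplus_list_append: "oplus_list (xs @ ys) = oplus (oplus_list xs) (oplus_list ys)"
  by (induction xs) (simp_all add: oplus_list_def oplus_zero_left oplus_assoc)

lemma cl_eq: "cl A = {oplus_list rs | rs. set rs \<subseteq> A}"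
  by (simp add: cl_def oplus_list_def)

lemma oplus_list_in_cl: "set rs \<subseteq> A \<Longrightarrow> oplus_list rs \<in> cl A"
  unfolding cl_eq by blast

lemma zero_in_cl: "zero_reaction \<in> cl A"
  using oplus_list_in_cl[of "[]"] by (simp add: oplus_list_def)

lemma oplus_in_cl:
  assumes "p \<in> cl A" and "q \<in> cl A"
  shows "oplus p q \<in> cl A"
proof -
  from assms obtain xs ys where "set xs \<subseteq> A" "set ys \<subseteq> A"
    and "p = oplus_list xs" "q = oplus_list ys"
    unfolding cl_eq by blast
  then show ?thesis
    using oplus_list_in_cl[of "xs @ ys" A] by (simp add: oplus_list_append)
qed

lemma reaction_in_cl: "r \<in> A \<Longrightarrow> r \<in> cl A"
  using oplus_list_in_cl[of "[r]" A] by (simp add: oplus_list_def oplus_def zero_reaction_def)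

lemma cl_subset_cl: "A \<subseteq> cl B \<Longrightarrow> cl A \<subseteq> cl B"
proof
  fix p assume "A \<subseteq> cl B" and "p \<in> cl A"
  then obtain rs where "set rs \<subseteq> cl B" and p: "p = oplus_list rs"
    unfolding cl_eq by blast
  then show "p \<in> cl B"
    by (induction rs arbitrary: p)
      (auto simp: oplus_list_def intro: oplus_in_cl zero_in_cl)
qed

lemma int_fire:
  "fst r \<le> x \<Longrightarrow> int (fire r x i) = int (x i) + (int (snd r i) - int (fst r i))"
  by (simp add: fire_def le_fun_def trans_le_add1)

lemma active_Nil: "active [] x"
  by (simp add: active_def)

lemma active_Cons: "active (r # rs) x \<longleftrightarrow> fst r \<le> x \<and> active rs (fire r x)"
proof -
  have "active (r # rs) x \<longleftrightarrow> fst r \<le> x \<and> (\<forall>k < length rs. \<forall>i.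
      int (x i) + (int (snd r i) - int (fst r i))
        + (\<Sum>j<k. int (snd (rs ! j) i) - int (fst (rs ! j) i)) \<ge> int (fst (rs ! k) i))"
    by (simp add: active_def All_less_Suc2 sum.lessThan_Suc_shift le_fun_def add.assoc
        del: sum.lessThan_Suc)
  then show ?thesis
    by (auto simp: active_def int_fire)
qed

lemma active_iff_source_le: "active rs x \<longleftrightarrow> fst (oplus_list rs) \<le> x"
proof (induction rs arbitrary: x)
  case Nil
  then show ?case by (simp add: active_Nil oplus_list_def zero_reaction_def le_fun_def)
next
  case (Cons r rs)
  have "(a \<le> x \<and> z \<le> x - a + a') \<longleftrightarrow> a + (z - a') \<le> x" for a a' z x :: nat
    by arith
  then show ?case
    by (simp add: active_Cons Cons.IH oplus_list_def oplus_def fire_def le_fun_def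
        all_conj_distrib [symmetric])
qed

lemma net_change_oplus_list:
  "int (snd (oplus_list rs) i) - int (fst (oplus_list rs) i) = net_change rs i"
proof (induction rs)
  case Nil
  then show ?case by (simp add: oplus_list_def zero_reaction_def net_change_def)
next
  case (Cons r rs)
  have "net_change (r # rs) i = int (snd r i) - int (fst r i) + net_change rs i"
    by (simp add: net_change_def sum.lessThan_Suc_shift del: sum.lessThan_Suc)
  with Cons.IH show ?case
    by (simp add: oplus_list_def oplus_def)
qed

lemma leads_to_iff_oplus_list:
  "leads_to R x x' \<longleftrightarrow>
     (\<exists>rs. set rs \<subseteq> R \<and> fst (oplus_list rs) \<le> x \<and> x' = fire (oplus_list rs) x)"
proof -
  have "(\<forall>i. int (x' i) = int (x i) + net_change rs i) \<longleftrightarrow> x' = fire (oplus_list rs) x"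
    if "fst (oplus_list rs) \<le> x" for rs
    by (simp add: fun_eq_iff int_fire[OF that, symmetric] flip: net_change_oplus_list)
  then show ?thesis
    unfolding leads_to_def active_iff_source_le by (auto simp: net_change_def)
qed

lemma mem_reach_iff: "x' \<in> reach R x \<longleftrightarrow> (\<exists>p \<in> cl R. fst p \<le> x \<and> fire p x = x')"
  unfolding reach_def mem_Collect_eq leads_to_iff_oplus_list cl_eq by blast

lemma reach_eq_if_cl_eq:
  assumes "cl R = cl R'"
  shows "reach R = reach R'"
  using assms by (intro ext set_eqI) (simp only: mem_reach_iff)

lemma target_in_reach_source: "r \<in> R \<Longrightarrow> snd r \<in> reach R (fst r)"
  unfolding mem_reach_iff by (intro bexI[of _ r]) (simp_all add: fire_def reaction_in_cl)

lemma fire_source_eq_target_imp_eq: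
  assumes "\<not> has_catalytic r" and "fst p \<le> fst r" and "fire p (fst r) = snd r"
  shows "p = r"
proof -
  have "fst p i = fst r i \<and> snd p i = snd r i" for i
  proof -
    have "fst r i = 0 \<or> snd r i = 0" and "fst p i \<le> fst r i"
      and "fst r i - fst p i + snd p i = snd r i"
      using assms by (auto simp: has_catalytic_def le_fun_def fire_def fun_eq_iff)
    then show ?thesis by arith
  qed
  then show ?thesis by (simp add: prod_eq_iff fun_eq_iff)
qed

lemma noncatalytic_in_cl_if_reach:
  assumes "\<not> has_catalytic r" and "snd r \<in> reach R (fst r)"
  shows "r \<in> cl R"
proof -
  from assms(2) obtain p where "p \<in> cl R" "fst p \<le> fst r" "fire p (fst r) = snd r"
    unfolding mem_reach_iff by blast
  moreover from assms(1) this(2,3) have "p = r"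
    by (rule fire_source_eq_target_imp_eq)
  ultimately show ?thesis by simp
qed

lemma cl_subset_if_reach_subset:
  assumes "no_catalytic R" and "\<forall>x. reach R x \<subseteq> reach R' x"
  shows "cl R \<subseteq> cl R'"
proof (rule cl_subset_cl, rule subsetI)
  fix r assume "r \<in> R"
  then have "\<not> has_catalytic r"
    using assms(1) by (simp add: no_catalytic_def)
  moreover have "snd r \<in> reach R' (fst r)"
    using target_in_reach_source[OF \<open>r \<in> R\<close>] assms(2) by blast
  ultimately show "r \<in> cl R'"
    by (rule noncatalytic_in_cl_if_reach)
qed

theorem theorem3p5:
  fixes R1 R2 :: "('n::finite) reaction set"
  assumes "is_RN R1" and "is_RN R2"
    and "no_catalytic R1" and "no_catalytic R2"
  shows "cl R1 = cl R2 \<longleftrightarrow> (\<forall>x. reach R1 x = reach R2 x)"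
proof
  assume "cl R1 = cl R2"
  then have "reach R1 = reach R2" by (rule reach_eq_if_cl_eq)
  then show "\<forall>x. reach R1 x = reach R2 x" by simp
next
  assume reach_eq: "\<forall>x. reach R1 x = reach R2 x"
  have "cl R1 \<subseteq> cl R2"
    by (rule cl_subset_if_reach_subset[OF assms(3)]) (simp add: reach_eq)
  moreover have "cl R2 \<subseteq> cl R1"
    by (rule cl_subset_if_reach_subset[OF assms(4)]) (simp add: reach_eq)
  ultimately show "cl R1 = cl R2" by (rule subset_antisym)
qed

end
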